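(* Let $n\ge 2$ be an integer and let $Q_{4n}=\langle x,y : x^{2n}=1,\ x^n=y^2,\ yx=x^{-1}y\rangle$ be the generalized quaternion group of order $4n$. Let $\Gamma_{Q_{4n}}$ be its non-commuting graph. Let $t_1,t_2$ be the two roots of the equation $(2n-2)x^2+(-4n+10)x-2n=0$. Then the spectrum of the distance signless Laplacian matrix $D^Q(\Gamma_{Q_{4n}})$ (eigenvalues counted with multiplicity, multiplicities being added if two of the listed values coincide) consists of: (a) $4n-4$ with multiplicity $n$; (b) $6n-8$ with multiplicity $2n-3$; (c) $4n-2$ with multiplicity $n-1$; (d) $t_k(2n-2)+(6n-2)$ with multiplicity $1$, for each $k=1,2$.
   Context: For a finite non-abelian group $G$ with centre $Z(G)$, the non-commuting graph $\Gamma_G$ is the simple undirected graph with vertex set $G\setminus Z(G)$, in which two distinct vertices $u,v$ are adjacent if and only if $uv\ne vu$. For a connected graph $H$, $d_{uv}$ denotes the length of a shortest path between $u$ and $v$; the distance matrix $D(H)$ has $(u,v)$-entry $d_{uv}$. The transmission of a vertex $v$ is $\sum_{u} d_{uv}$, and $Tr(H)$ is the diagonal matrix of vertex transmissions. The distance signless Laplacian matrix is $D^Q(H)=Tr(H)+D(H)$. *)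

theory Defs
  imports "HOL-Algebra.Generated_Groups" "Jordan_Normal_Form.Char_Poly"
begin

definition group_center :: "('a, 'b) monoid_scheme \<Rightarrow> 'a set" where
  "group_center G = {z \<in> carrier G. \<forall>g \<in> carrier G. z \<otimes>\<^bsub>G\<^esub> g = g \<otimes>\<^bsub>G\<^esub> z}"

definition nc_vertices :: "('a, 'b) monoid_scheme \<Rightarrow> 'a set" where
  "nc_vertices G = carrier G - group_center G"

definition nc_adj :: "('a, 'b) monoid_scheme \<Rightarrow> 'a \<Rightarrow> 'a \<Rightarrow> bool" where
  "nc_adj G u v \<longleftrightarrow> u \<in> nc_vertices G \<and> v \<in> nc_vertices G \<and> u \<noteq> v
     \<and> u \<otimes>\<^bsub>G\<^esub> v \<noteq> v \<otimes>\<^bsub>G\<^esub> u"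

definition has_walk :: "'a set \<Rightarrow> ('a \<Rightarrow> 'a \<Rightarrow> bool) \<Rightarrow> 'a \<Rightarrow> 'a \<Rightarrow> nat \<Rightarrow> bool" where
  "has_walk V E u v k \<longleftrightarrow> (\<exists>p. length p = Suc k \<and> hd p = u \<and> last p = v \<and> set p \<subseteq> V
      \<and> (\<forall>i<k. E (p ! i) (p ! Suc i)))"

definition graph_dist :: "'a set \<Rightarrow> ('a \<Rightarrow> 'a \<Rightarrow> bool) \<Rightarrow> 'a \<Rightarrow> 'a \<Rightarrow> nat" where
  "graph_dist V E u v = (LEAST k. has_walk V E u v k)"

definition transmission :: "'a set \<Rightarrow> ('a \<Rightarrow> 'a \<Rightarrow> bool) \<Rightarrow> 'a \<Rightarrow> nat" where
  "transmission V E v = (\<Sum>u\<in>V. graph_dist V E u v)"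

definition dist_signless_laplacian ::
    "'a set \<Rightarrow> ('a \<Rightarrow> 'a \<Rightarrow> bool) \<Rightarrow> 'a list \<Rightarrow> real mat" where
  "dist_signless_laplacian V E vs = mat (length vs) (length vs) (\<lambda>(i, j).
      (if i = j then real (transmission V E (vs ! i)) else 0)
      + real (graph_dist V E (vs ! i) (vs ! j)))"

definition poly_of_roots :: "real multiset \<Rightarrow> real poly" where
  "poly_of_roots M = prod_mset (image_mset (\<lambda>a. [:- a, 1:]) M)"

end

theory Submission
  imports Defs
begin

text \<open>
  In \<open>Q\<^sub>4\<^sub>n = \<langle>x\<rangle> \<union> \<langle>x\<rangle>y\<close> the centre is \<open>{1, x\<^sup>n}\<close>; powers of \<open>x\<close> commute with each other and
  with no \<open>x\<^sup>k y\<close>, while \<open>x\<^sup>k y\<close> and \<open>x\<^sup>l y\<close> commute iff \<open>k \<equiv> l (mod n)\<close>. Hence the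
  non-commuting graph has diameter 2, the distance being 2 exactly between two non-central powers
  of \<open>x\<close> and between \<open>x\<^sup>k y\<close> and \<open>x\<^sup>k\<^sup>+\<^sup>n y\<close>, and all transmissions are \<open>6n - 6\<close> or \<open>4n - 2\<close>.

  The characteristic polynomial is read off from an explicit unit lower triangular change of
  basis that makes \<open>D\<^sup>Q\<close> upper triangular. Its vectors are differences of powers of \<open>x\<close>
  (eigenvalue \<open>6n - 8\<close>), the differences \<open>x\<^sup>k y - x\<^sup>k\<^sup>+\<^sup>n y\<close> (eigenvalue \<open>4n - 4\<close>), differences of
  consecutive \<open>x\<^sup>k y\<close> with \<open>k \<ge> n\<close> (eigenvalue \<open>4n - 2\<close> modulo the previous vectors), and two
  vectors in the plane spanned by the indicators of the two vertex classes, on which \<open>D\<^sup>Q\<close> acts by the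
  quotient matrix \<open>[[10n - 12, 2n], [2n - 2, 6n - 2]]\<close> with eigenvalues \<open>t\<^sub>k(2n - 2) + 6n - 2\<close>.
\<close>

lemma sum_of_bool_delta:
  "finite A \<Longrightarrow> s \<in> A \<Longrightarrow> (\<Sum>k\<in>A. of_bool (s = k) * g k) = (g s :: 'a :: comm_semiring_1)"
proof -
  assume "finite A" "s \<in> A"
  moreover have "A \<inter> {k. s = k} = {s}" using \<open>s \<in> A\<close> by auto
  ultimately show ?thesis by simp
qed

lemma sum_upt_of_bool_eq: "(\<Sum>k = 0..<N. of_bool (k = s) :: 'a :: comm_semiring_1) = of_bool (s < (N::nat))"
proof -
  have "{0..<N} \<inter> {k. k = s} = (if s < N then {s} else {})" by auto
  then show ?thesis by simp
qed

lemma sum_upt_of_bool_ge: "(\<Sum>k = 0..<N. of_bool (a \<le> k) :: 'a :: comm_semiring_1) = of_nat ((N::nat) - a)"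
proof -
  have "{0..<N} \<inter> {k. a \<le> k} = {a..<N}" by auto
  then show ?thesis by simp
qed

lemma sum_upt_mult_of_bool_less:
  "a \<le> (N::nat) \<Longrightarrow> (\<Sum>k = 0..<N. g k * of_bool (k < a)) = (\<Sum>k = 0..<a. g k :: 'a :: comm_semiring_1)"
proof -
  assume "a \<le> N"
  then have "{0..<N} \<inter> {k. k < a} = {0..<a}" by auto
  then show ?thesis by simp
qed

lemma sum_upt_mult_sum_list_of_bool:
  assumes "\<And>s c. (s, c) \<in> set L \<Longrightarrow> s < (N::nat)"
  shows "(\<Sum>k = 0..<N. g k * (\<Sum>(s, c)\<leftarrow>L. c * of_bool (k = s)))
    = (\<Sum>(s, c)\<leftarrow>L. c * g s :: 'a :: comm_semiring_1)"
  using assms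
proof (induction L)
  case (Cons sc L)
  obtain s c where sc: "sc = (s, c)" by force
  have "(\<Sum>k = 0..<N. g k * (\<Sum>(s, c)\<leftarrow>sc # L. c * of_bool (k = s)))
      = (\<Sum>k = 0..<N. c * (g k * of_bool (k = s)))
        + (\<Sum>k = 0..<N. g k * (\<Sum>(s, c)\<leftarrow>L. c * of_bool (k = s)))"
    by (simp add: sc distrib_left sum.distrib mult.left_commute)
  also have "(\<Sum>k = 0..<N. c * (g k * of_bool (k = s))) = c * g s"
  proof -
    have "s < N" using Cons.prems[of s c] sc by simp
    then have "{0..<N} \<inter> {k. k = s} = {s}" by auto
    then show ?thesis by (simp add: sum_distrib_left[symmetric])
  qed
  also have "(\<Sum>k = 0..<N. g k * (\<Sum>(s, c)\<leftarrow>L. c * of_bool (k = s))) = (\<Sum>(s, c)\<leftarrow>L. c * g s)"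
    using Cons.prems by (intro Cons.IH) auto
  finally show ?case by (simp add: sc)
qed simp

lemma map_upt_eq_replicate:
  "(\<And>i. a \<le> i \<Longrightarrow> i < b \<Longrightarrow> f i = c) \<Longrightarrow> map f [a..<b] = replicate (b - a) c"
  by (rule nth_equalityI) auto

lemma upt_eq_append: "i \<le> j \<Longrightarrow> j \<le> k \<Longrightarrow> [i..<k] = [i..<j] @ [j..<k]"
  using upt_add_eq_append[of i j "k - j"] by simp

lemma similar_mat_intertwined:
  fixes A P T :: "'a :: field mat"
  assumes A: "A \<in> carrier_mat N N" and P: "P \<in> carrier_mat N N" and T: "T \<in> carrier_mat N N"
    and det_P: "det P \<noteq> 0" and AP: "A * P = P * T"
  shows "similar_mat A T"
proof -
  from det_non_zero_imp_unit[OF P det_P, unfolded Units_def, of "()"]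
  obtain Q where Q: "Q \<in> carrier_mat N N" and QP: "Q * P = 1\<^sub>m N" and PQ: "P * Q = 1\<^sub>m N"
    by (auto simp: ring_mat_def)
  have "A = A * (P * Q)" using A PQ by simp
  also have "\<dots> = (A * P) * Q" using A P Q by simp
  also have "\<dots> = P * T * Q" using AP by simp
  finally have "similar_mat_wit A T P Q"
    unfolding similar_mat_wit_def Let_def using A P Q T PQ QP by auto
  then show ?thesis unfolding similar_mat_def by blast
qed

lemma similar_mat_reindex:
  fixes f :: "nat \<Rightarrow> nat \<Rightarrow> 'a :: field"
  assumes \<sigma>: "bij_betw \<sigma> {..<N} {..<N}"
  shows "similar_mat (mat N N (\<lambda>(i, j). f (\<sigma> i) (\<sigma> j))) (mat N N (\<lambda>(i, j). f i j))"
proof -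
  define P :: "'a mat" where "P = mat N N (\<lambda>(i, j). of_bool (\<sigma> i = j))"
  have \<sigma>_lt: "\<sigma> i \<in> {0..<N}" if "i < N" for i
    using \<sigma> that by (auto simp: bij_betw_def)
  have \<sigma>_eq: "\<sigma> i = \<sigma> j \<longleftrightarrow> i = j" if "i < N" "j < N" for i j
    using \<sigma> that by (auto simp: bij_betw_def inj_on_def)
  have "P * transpose_mat P = 1\<^sub>m N"
  proof (rule eq_matI)
    fix i j assume "i < dim_row (1\<^sub>m N :: 'a mat)" "j < dim_col (1\<^sub>m N :: 'a mat)"
    then have ij: "i < N" "j < N" by auto
    have "(P * transpose_mat P) $$ (i, j) = (\<Sum>k = 0..<N. of_bool (\<sigma> i = k) * of_bool (\<sigma> j = k))"
      using ij by (simp add: P_def scalar_prod_def)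
    also have "\<dots> = of_bool (\<sigma> j = \<sigma> i)"
      using ij \<sigma>_lt by (simp add: sum_of_bool_delta)
    finally show "(P * transpose_mat P) $$ (i, j) = 1\<^sub>m N $$ (i, j)"
      using ij \<sigma>_eq by auto
  qed (auto simp: P_def)
  then have "det P * det (transpose_mat P) = 1"
    by (metis P_def det_mult det_one mat_carrier transpose_carrier_mat)
  then have det_P: "det P \<noteq> 0" by auto
  have "mat N N (\<lambda>(i, j). f (\<sigma> i) (\<sigma> j)) * P = P * mat N N (\<lambda>(i, j). f i j)"
  proof (rule eq_matI)
    fix i j assume "i < dim_row (P * mat N N (\<lambda>(i, j). f i j))" "j < dim_col (P * mat N N (\<lambda>(i, j). f i j))"
    then have ij: "i < N" "j < N" by (auto simp: P_def)
    have "(mat N N (\<lambda>(i, j). f (\<sigma> i) (\<sigma> j)) * P) $$ (i, j) = (\<Sum>k = 0..<N. f (\<sigma> i) (\<sigma> k) * of_bool (\<sigma> k = j))"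
      using ij by (simp add: P_def scalar_prod_def)
    also have "\<dots> = (\<Sum>k = 0..<N. f (\<sigma> i) k * of_bool (k = j))"
      using sum.reindex_bij_betw[OF \<sigma>, of "\<lambda>k. f (\<sigma> i) k * of_bool (k = j)"]
      by (simp add: atLeast0LessThan)
    also have "\<dots> = (\<Sum>k = 0..<N. of_bool (\<sigma> i = k) * f k j)"
      using ij \<sigma>_lt by (simp add: sum_of_bool_delta)
    also have "\<dots> = (P * mat N N (\<lambda>(i, j). f i j)) $$ (i, j)"
      using ij by (simp add: P_def scalar_prod_def)
    finally show "(mat N N (\<lambda>(i, j). f (\<sigma> i) (\<sigma> j)) * P) $$ (i, j) = (P * mat N N (\<lambda>(i, j). f i j)) $$ (i, j)" .
  qed (auto simp: P_def)
  with det_P show ?thesis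
    by (intro similar_mat_intertwined[of _ N P]) (auto simp: P_def)
qed

section \<open>Graph distances\<close>

lemma has_walk_0_imp_eq: "has_walk V E u v 0 \<Longrightarrow> u = v"
  unfolding has_walk_def by (metis last_ConsL length_0_conv length_Suc_conv list.sel(1))

lemma has_walk_1_imp_adj: "has_walk V E u v 1 \<Longrightarrow> E u v"
proof -
  assume "has_walk V E u v 1"
  then obtain p where p: "length p = 2" "hd p = u" "last p = v" "E (p ! 0) (p ! 1)"
    unfolding has_walk_def by (auto simp: numeral_2_eq_2)
  then obtain a b where "p = [a, b]"
    by (metis One_nat_def Suc_1 length_0_conv length_Suc_conv)
  with p show "E u v" by simp
qed

lemma graph_dist_self: "u \<in> V \<Longrightarrow> graph_dist V E u u = 0"
  unfolding graph_dist_def has_walk_def by (rule Least_eq_0) (rule exI[of _ "[u]"], simp)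

lemma graph_dist_eq_1:
  assumes "u \<in> V" "v \<in> V" "u \<noteq> v" "E u v"
  shows "graph_dist V E u v = 1"
  unfolding graph_dist_def
proof (rule Least_equality)
  show "has_walk V E u v 1"
    unfolding has_walk_def using assms by (intro exI[of _ "[u, v]"]) simp
  show "1 \<le> k" if "has_walk V E u v k" for k
    using that has_walk_0_imp_eq[of V E u v] assms(3) by (cases k) auto
qed

lemma graph_dist_eq_2:
  assumes "u \<in> V" "v \<in> V" "w \<in> V" "u \<noteq> v" "\<not> E u v" "E u w" "E w v"
  shows "graph_dist V E u v = 2"
  unfolding graph_dist_def
proof (rule Least_equality)
  have "E ([u, w, v] ! i) ([u, w, v] ! Suc i)" if "i < 2" for i
    using that assms less_2_cases by fastforce
  then show "has_walk V E u v 2"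
    unfolding has_walk_def using assms by (intro exI[of _ "[u, w, v]"]) simp
  show "2 \<le> k" if "has_walk V E u v k" for k
  proof (rule ccontr)
    assume "\<not> 2 \<le> k"
    then have "k = 0 \<or> k = 1" by auto
    then show False
      using that has_walk_0_imp_eq[of V E u v] has_walk_1_imp_adj[of V E u v] assms(4,5) by auto
  qed
qed

section \<open>The non-commuting graph of the generalized quaternion group\<close>

text \<open>Indices \<open>i < m\<close> stand for the non-central powers of \<open>x\<close>, indices \<open>m \<le> i < N\<close> for the
  elements \<open>x\<^sup>i\<^sup>-\<^sup>m y\<close>; \<open>partner i\<close> is the unique other index of the latter kind commuting with \<open>i\<close>.\<close>

locale quaternion_nc_index =
  fixes n :: nat
  assumes two_le_n: "2 \<le> n"
begin

abbreviation m :: nat where "m \<equiv> 2 * n - 2"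
abbreviation N :: nat where "N \<equiv> 4 * n - 2"

definition partner :: "nat \<Rightarrow> nat" where
  "partner i = (if i < m + n then i + n else i - n)"

definition idx_dist :: "nat \<Rightarrow> nat \<Rightarrow> nat" where
  "idx_dist i k = (if i = k then 0
     else if (i < m \<and> k < m) \<or> (m \<le> i \<and> m \<le> k \<and> k = partner i) then 2 else 1)"

definition idx_trans :: "nat \<Rightarrow> real" where
  "idx_trans i = (if i < m then 6 * real n - 6 else 4 * real n - 2)"

definition dsl_entry :: "nat \<Rightarrow> nat \<Rightarrow> real" where
  "dsl_entry i k = of_bool (i = k) * idx_trans i + real (idx_dist i k)"

definition dsl_mat :: "real mat" where
  "dsl_mat = mat N N (\<lambda>(i, k). dsl_entry i k)"

lemma partner_range:
  "m \<le> i \<Longrightarrow> i < N \<Longrightarrow> m \<le> partner i \<and> partner i < N \<and> partner i \<noteq> i"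
  using two_le_n unfolding partner_def by auto

lemma partner_eq_iff:
  "m \<le> i \<Longrightarrow> i < N \<Longrightarrow> m \<le> k \<Longrightarrow> k < N \<Longrightarrow> partner i = k \<longleftrightarrow> i = partner k"
  using two_le_n unfolding partner_def by auto

lemma idx_dist_sym: "i < N \<Longrightarrow> k < N \<Longrightarrow> idx_dist k i = idx_dist i k"
  unfolding idx_dist_def using partner_eq_iff[of i k] by auto

lemma dsl_entry_rot:
  "i < m \<Longrightarrow> dsl_entry i k = 1 + of_bool (k < m) + (6 * real n - 8) * of_bool (k = i)"
  unfolding dsl_entry_def idx_dist_def idx_trans_def by auto

lemma dsl_entry_refl:
  "m \<le> i \<Longrightarrow> i < N \<Longrightarrow>
    dsl_entry i k = 1 + of_bool (k = partner i) + (4 * real n - 3) * of_bool (k = i)"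
  unfolding dsl_entry_def idx_dist_def idx_trans_def using partner_range[of i] by auto

lemma dsl_mult_rot:
  assumes "i < m"
  shows "(\<Sum>k = 0..<N. dsl_entry i k * v k)
    = (6 * real n - 8) * v i + (\<Sum>k = 0..<N. v k) + (\<Sum>k = 0..<m. v k)"
proof -
  have sets: "{0..<N} \<inter> {k. k < m} = {0..<m}" "{0..<N} \<inter> {k. k = i} = {i}"
    using assms by auto
  have "(\<Sum>k = 0..<N. dsl_entry i k * v k)
      = (\<Sum>k = 0..<N. v k + v k * of_bool (k < m) + (6 * real n - 8) * (v k * of_bool (k = i)))"
    using assms by (intro sum.cong) (simp_all add: dsl_entry_rot algebra_simps)
  also have "\<dots> = (\<Sum>k = 0..<N. v k) + (\<Sum>k = 0..<N. v k * of_bool (k < m))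
      + (6 * real n - 8) * (\<Sum>k = 0..<N. v k * of_bool (k = i))"
    by (simp only: sum.distrib sum_distrib_left)
  finally show ?thesis using sets by simp
qed

lemma dsl_mult_refl:
  assumes "m \<le> i" "i < N"
  shows "(\<Sum>k = 0..<N. dsl_entry i k * v k)
    = (4 * real n - 3) * v i + v (partner i) + (\<Sum>k = 0..<N. v k)"
proof -
  have sets: "{0..<N} \<inter> {k. k = partner i} = {partner i}" "{0..<N} \<inter> {k. k = i} = {i}"
    using assms partner_range[OF assms] by auto
  have "(\<Sum>k = 0..<N. dsl_entry i k * v k)
      = (\<Sum>k = 0..<N. v k + v k * of_bool (k = partner i) + (4 * real n - 3) * (v k * of_bool (k = i)))"
    using assms by (intro sum.cong) (simp_all add: dsl_entry_refl algebra_simps)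
  also have "\<dots> = (\<Sum>k = 0..<N. v k) + (\<Sum>k = 0..<N. v k * of_bool (k = partner i))
      + (4 * real n - 3) * (\<Sum>k = 0..<N. v k * of_bool (k = i))"
    by (simp only: sum.distrib sum_distrib_left)
  finally show ?thesis using sets by simp
qed

lemma sum_idx_dist:
  assumes "i < N"
  shows "(\<Sum>k = 0..<N. real (idx_dist i k)) = idx_trans i"
proof -
  have "(\<Sum>k = 0..<N. dsl_entry i k * 1) = idx_trans i + (\<Sum>k = 0..<N. real (idx_dist i k))"
    using assms by (simp add: dsl_entry_def sum.distrib)
  moreover have "(\<Sum>k = 0..<N. dsl_entry i k * 1) = 2 * idx_trans i"
    using dsl_mult_rot[of i "\<lambda>_. 1"] dsl_mult_refl[of i "\<lambda>_. 1"] assms two_le_n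
    by (cases "i < m") (auto simp: idx_trans_def)
  ultimately show ?thesis by simp
qed

lemma mod_n_eq_iff_partner:
  assumes "m \<le> i" "i < N" "m \<le> k" "k < N"
  shows "(i - m) mod n = (k - m) mod n \<longleftrightarrow> k = i \<or> k = partner i"
proof -
  define l q where "l = i - m" and "q = k - m"
  then have lq: "l < 2 * n" "q < 2 * n" and i: "i = m + l" and k: "k = m + q"
    using assms by auto
  have "partner i = m + (if l < n then l + n else l - n)"
    unfolding partner_def i by auto
  then have "k = partner i \<longleftrightarrow> q = (if l < n then l + n else l - n)"
    unfolding k by simp
  moreover have "k = i \<longleftrightarrow> q = l"
    unfolding i k by simp
  ultimately have "k = i \<or> k = partner i \<longleftrightarrow> q = l \<or> q = l + n \<or> l = q + n"
    using lq by auto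
  moreover have "l mod n = q mod n \<longleftrightarrow> q = l \<or> q = l + n \<or> l = q + n"
  proof -
    have mod_n: "a mod n = (if a < n then a else a - n)" if "a < 2 * n" for a
      using that by (simp add: mod_if[of a n] le_mod_geq)
    show ?thesis
      using lq unfolding mod_n[OF lq(1)] mod_n[OF lq(2)] by (cases "l < n"; cases "q < n"; simp; linarith)
  qed
  ultimately show ?thesis
    unfolding i k by simp
qed

end

locale gen_quaternion = group G + quaternion_nc_index n
  for G (structure) and n +
  fixes x y :: 'a
  assumes x_carrier: "x \<in> carrier G" and y_carrier: "y \<in> carrier G"
    and generate_x_y: "generate G {x, y} = carrier G"
    and card_carrier: "card (carrier G) = 4 * n"
    and x_pow_2n: "x [^] (2 * n) = \<one>"
    and x_pow_n: "x [^] n = y [^] (2::nat)"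
    and y_x: "y \<otimes> x = inv x \<otimes> y"
begin

lemma x_pow_mod: "x [^] (a::nat) = x [^] (a mod (2 * n))"
proof -
  have "x [^] a = (x [^] (2 * n)) [^] (a div (2 * n)) \<otimes> x [^] (a mod (2 * n))"
    using x_carrier by (simp add: nat_pow_mult nat_pow_pow)
  then show ?thesis using x_pow_2n x_carrier by simp
qed

lemma y_y: "y \<otimes> y = x [^] n"
  using x_pow_n y_carrier by (simp add: numeral_2_eq_2)

lemma y_x_pow: "y \<otimes> x [^] (k::nat) = inv (x [^] k) \<otimes> y"
proof (induction k)
  case (Suc k)
  have "y \<otimes> x [^] Suc k = (y \<otimes> x [^] k) \<otimes> x"
    using x_carrier y_carrier by (simp add: m_assoc)
  also have "\<dots> = (inv (x [^] k) \<otimes> inv x) \<otimes> y"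
    using Suc y_x x_carrier y_carrier by (simp add: m_assoc)
  also have "inv (x [^] k) \<otimes> inv x = inv (x \<otimes> x [^] k)"
    using x_carrier by (simp add: inv_mult_group)
  finally show ?case by (simp only: nat_pow_Suc2[OF x_carrier, symmetric])
qed (use y_carrier in simp)

lemma inv_x_pow: "inv (x [^] (k::nat)) = x [^] ((2 * n - 1) * k)"
proof (rule inv_equality)
  have "x [^] ((2 * n - 1) * k) \<otimes> x [^] k = (x [^] (2 * n)) [^] k"
    using x_carrier two_le_n by (simp add: nat_pow_mult nat_pow_pow algebra_simps)
  then show "x [^] ((2 * n - 1) * k) \<otimes> x [^] k = \<one>"
    using x_pow_2n by simp
qed (use x_carrier in auto)

lemma x_pow_y_mult_x_pow: "x [^] (k::nat) \<otimes> y \<otimes> x [^] (l::nat) = x [^] (k + (2 * n - 1) * l) \<otimes> y"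
  using x_carrier y_carrier by (simp add: m_assoc y_x_pow inv_x_pow nat_pow_mult[symmetric])

lemma carrier_normal_form: "g \<in> carrier G \<Longrightarrow> \<exists>k::nat. g = x [^] k \<or> g = x [^] k \<otimes> y"
proof -
  define NF where "NF = {g. \<exists>k::nat. g = x [^] k \<or> g = x [^] k \<otimes> y}"
  have mult_NF: "a \<otimes> b \<in> NF" if "a \<in> NF" "b \<in> NF" for a b
  proof -
    from that obtain k l :: nat where
      k: "a = x [^] k \<or> a = x [^] k \<otimes> y" and l: "b = x [^] l \<or> b = x [^] l \<otimes> y"
      unfolding NF_def by auto
    have "x [^] k \<otimes> y \<otimes> (x [^] l \<otimes> y) = x [^] (k + (2 * n - 1) * l + n)"
      using x_carrier y_carrier
      by (simp add: m_assoc[symmetric] x_pow_y_mult_x_pow) (simp add: m_assoc y_y nat_pow_mult)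
    with k l show ?thesis
      using x_carrier y_carrier unfolding NF_def
      by (auto simp: nat_pow_mult x_pow_y_mult_x_pow m_assoc[symmetric])
  qed
  have inv_y: "inv y = x [^] n \<otimes> y"
    by (rule inv_equality) (use y_y x_carrier y_carrier x_pow_2n in \<open>simp_all add: m_assoc nat_pow_mult mult_2\<close>)
  assume "g \<in> carrier G"
  then have "g \<in> generate G {x, y}" using generate_x_y by simp
  then have "g \<in> NF"
  proof (induction rule: generate.induct)
    case one
    show ?case unfolding NF_def by (auto intro: exI[of _ 0])
  next
    case (incl h)
    then show ?case
      using x_carrier y_carrier unfolding NF_def by (auto intro: exI[of _ 0] exI[of _ 1])
  next
    case (inv h)
    then show ?case
      using inv_x_pow[of 1] inv_y x_carrier unfolding NF_def by auto
  next
    case (eng h1 h2)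
    then show ?case by (blast intro: mult_NF)
  qed
  then show ?thesis unfolding NF_def by simp
qed

definition qelem :: "nat \<Rightarrow> 'a" where
  "qelem k = (if k < 2 * n then x [^] k else x [^] (k - 2 * n) \<otimes> y)"

lemma carrier_eq_qelem_image: "carrier G = qelem ` {..<4 * n}"
proof
  show "qelem ` {..<4 * n} \<subseteq> carrier G"
    using x_carrier y_carrier unfolding qelem_def by auto
  show "carrier G \<subseteq> qelem ` {..<4 * n}"
  proof
    fix g assume "g \<in> carrier G"
    then obtain k :: nat where "g = x [^] k \<or> g = x [^] k \<otimes> y"
      using carrier_normal_form by blast
    then have "g = qelem (k mod (2 * n)) \<or> g = qelem (2 * n + k mod (2 * n))"
      using two_le_n x_pow_mod[of k] unfolding qelem_def by auto
    moreover have "k mod (2 * n) < 2 * n"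
      using two_le_n by simp
    then have "k mod (2 * n) \<in> {..<4 * n}" "2 * n + k mod (2 * n) \<in> {..<4 * n}"
      by auto
    ultimately show "g \<in> qelem ` {..<4 * n}" by blast
  qed
qed

lemma inj_on_qelem: "inj_on qelem {..<4 * n}"
  by (rule eq_card_imp_inj_on) (use card_carrier carrier_eq_qelem_image in auto)

lemma x_pow_inj: "a < 2 * n \<Longrightarrow> b < 2 * n \<Longrightarrow> x [^] (a::nat) = x [^] b \<Longrightarrow> a = b"
  using inj_on_qelem unfolding inj_on_def qelem_def by force

lemma x_pow_neq_x_pow_y: "a < 2 * n \<Longrightarrow> b < 2 * n \<Longrightarrow> x [^] (a::nat) \<noteq> x [^] (b::nat) \<otimes> y"
proof
  assume ab: "a < 2 * n" "b < 2 * n" and "x [^] a = x [^] b \<otimes> y"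
  then have "qelem a = qelem (2 * n + b)" unfolding qelem_def by simp
  moreover have "a \<in> {..<4 * n}" "2 * n + b \<in> {..<4 * n}" using ab by auto
  ultimately have "a = 2 * n + b" using inj_on_qelem unfolding inj_on_def by blast
  then show False using ab by simp
qed

lemma x_pow_eq_iff: "x [^] (a::nat) = x [^] (b::nat) \<longleftrightarrow> a mod (2 * n) = b mod (2 * n)"
  using x_pow_inj[of "a mod (2 * n)" "b mod (2 * n)"] x_pow_mod[of a] x_pow_mod[of b] two_le_n
  by auto

lemma x_pow_double_eq_iff: "x [^] (2 * a) = x [^] (2 * b) \<longleftrightarrow> a mod n = b mod n"
  unfolding x_pow_eq_iff mod_mult_mult1 by simp

text \<open>By \<open>y x\<^sup>a = x\<^sup>-\<^sup>a y\<close>, the two products in each criterion differ by inverting a power of \<open>x\<close>.\<close>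

lemma x_pow_commute_x_pow_y_iff:
  "x [^] (a::nat) \<otimes> (x [^] (b::nat) \<otimes> y) = (x [^] b \<otimes> y) \<otimes> x [^] a \<longleftrightarrow> a mod n = 0"
proof -
  have "x [^] a \<otimes> (x [^] b \<otimes> y) = x [^] b \<otimes> x [^] a \<otimes> y"
    using x_carrier y_carrier by (simp add: m_assoc[symmetric] nat_pow_comm)
  moreover have "(x [^] b \<otimes> y) \<otimes> x [^] a = x [^] b \<otimes> inv (x [^] a) \<otimes> y"
    using x_carrier y_carrier by (simp add: m_assoc y_x_pow)
  ultimately have "x [^] a \<otimes> (x [^] b \<otimes> y) = (x [^] b \<otimes> y) \<otimes> x [^] a \<longleftrightarrow> x [^] a = inv (x [^] a)"
    using x_carrier y_carrier by (simp add: m_assoc)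
  also have "\<dots> \<longleftrightarrow> x [^] a \<otimes> x [^] a = \<one>"
    using x_carrier by (metis inv_equality nat_pow_closed r_inv)
  also have "\<dots> \<longleftrightarrow> x [^] (2 * a) = x [^] (2 * 0 :: nat)"
    using x_carrier by (simp add: nat_pow_mult mult_2)
  finally show ?thesis unfolding x_pow_double_eq_iff by simp
qed

lemma x_pow_y_commute_iff:
  "(x [^] (l::nat) \<otimes> y) \<otimes> (x [^] (k::nat) \<otimes> y) = (x [^] k \<otimes> y) \<otimes> (x [^] l \<otimes> y)
    \<longleftrightarrow> l mod n = k mod n"
proof -
  have prod: "(x [^] a \<otimes> y) \<otimes> (x [^] b \<otimes> y) = x [^] a \<otimes> inv (x [^] b) \<otimes> (y \<otimes> y)" for a b :: nat
  proof -
    have "(x [^] a \<otimes> y) \<otimes> (x [^] b \<otimes> y) = x [^] a \<otimes> (y \<otimes> x [^] b) \<otimes> y"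
      using x_carrier y_carrier by (simp add: m_assoc)
    then show ?thesis
      using x_carrier y_carrier by (simp add: y_x_pow m_assoc)
  qed
  have cancel: "a \<otimes> inv b \<otimes> (b \<otimes> c) = a \<otimes> c"
    if "a \<in> carrier G" "b \<in> carrier G" "c \<in> carrier G" for a b c
    using that by (simp add: m_assoc inv_solve_left')
  have "x [^] l \<otimes> inv (x [^] k) \<otimes> (x [^] k \<otimes> x [^] l) = x [^] l \<otimes> x [^] l"
    using x_carrier by (intro cancel) auto
  then have "x [^] l \<otimes> inv (x [^] k) \<otimes> (x [^] k \<otimes> x [^] l) = x [^] (2 * l)"
    using x_carrier by (simp add: nat_pow_mult mult_2)
  moreover have "x [^] k \<otimes> inv (x [^] l) \<otimes> (x [^] l \<otimes> x [^] k) = x [^] k \<otimes> x [^] k"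
    using x_carrier by (intro cancel) auto
  then have "x [^] k \<otimes> inv (x [^] l) \<otimes> (x [^] k \<otimes> x [^] l) = x [^] (2 * k)"
    using x_carrier by (simp add: nat_pow_mult mult_2 add.commute)
  ultimately have "x [^] l \<otimes> inv (x [^] k) = x [^] k \<otimes> inv (x [^] l) \<longleftrightarrow> x [^] (2 * l) = x [^] (2 * k)"
    using x_carrier by (metis inv_closed m_closed nat_pow_closed right_cancel)
  then show ?thesis
    unfolding prod x_pow_double_eq_iff using x_carrier y_carrier by simp
qed

lemma x_pow_central_iff: "x [^] (a::nat) \<in> group_center G \<longleftrightarrow> a mod n = 0"
proof
  assume "x [^] a \<in> group_center G"
  then have "x [^] a \<otimes> (x [^] (0::nat) \<otimes> y) = (x [^] (0::nat) \<otimes> y) \<otimes> x [^] a"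
    using y_carrier unfolding group_center_def by simp
  then show "a mod n = 0" unfolding x_pow_commute_x_pow_y_iff .
next
  assume "a mod n = 0"
  have "x [^] a \<otimes> g = g \<otimes> x [^] a" if g: "g \<in> carrier G" for g
  proof -
    obtain b :: nat where "g = x [^] b \<or> g = x [^] b \<otimes> y"
      using carrier_normal_form[OF g] by blast
    then show ?thesis
      using \<open>a mod n = 0\<close> x_carrier x_pow_commute_x_pow_y_iff by (auto simp: nat_pow_comm)
  qed
  then show "x [^] a \<in> group_center G"
    using x_carrier unfolding group_center_def by simp
qed

lemma x_pow_y_not_central: "x [^] (l::nat) \<otimes> y \<notin> group_center G"
proof
  assume "x [^] l \<otimes> y \<in> group_center G"
  then have "\<forall>g\<in>carrier G. x [^] l \<otimes> y \<otimes> g = g \<otimes> (x [^] l \<otimes> y)"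
    unfolding group_center_def by simp
  then have "x \<otimes> (x [^] l \<otimes> y) = (x [^] l \<otimes> y) \<otimes> x"
    using x_carrier by simp
  then show False
    using x_pow_commute_x_pow_y_iff[of 1 l] x_carrier two_le_n by simp
qed

definition rot_exp :: "nat \<Rightarrow> nat" where
  "rot_exp i = (if i < n - 1 then i + 1 else i + 2)"

definition vtx :: "nat \<Rightarrow> 'a" where
  "vtx i = (if i < m then x [^] rot_exp i else x [^] (i - m) \<otimes> y)"

lemma rot_exp_less: "i < m \<Longrightarrow> rot_exp i < 2 * n"
  unfolding rot_exp_def by auto

lemma rot_exp_mod_n: "i < m \<Longrightarrow> rot_exp i mod n \<noteq> 0"
  unfolding rot_exp_def by (cases "i < n - 1") (auto simp: le_mod_geq)

lemma rot_exp_inj: "i < m \<Longrightarrow> k < m \<Longrightarrow> rot_exp i = rot_exp k \<Longrightarrow> i = k"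
  unfolding rot_exp_def by (auto split: if_splits)

lemma rot_exp_surj: "s < 2 * n \<Longrightarrow> s mod n \<noteq> 0 \<Longrightarrow> \<exists>i<m. rot_exp i = s"
proof -
  assume s: "s < 2 * n" "s mod n \<noteq> 0"
  have "s \<noteq> 0" using s(2) by (metis mod_0)
  moreover have "s \<noteq> n" using s(2) by (metis mod_self)
  ultimately have "(if s < n then s - 1 else s - 2) < m \<and> rot_exp (if s < n then s - 1 else s - 2) = s"
    using s(1) unfolding rot_exp_def by auto
  then show ?thesis by blast
qed

lemma vtx_carrier: "vtx i \<in> carrier G"
  unfolding vtx_def using x_carrier y_carrier by auto

lemma inj_on_vtx: "inj_on vtx {..<N}"
proof (rule inj_onI)
  fix i k assume ik: "i \<in> {..<N}" "k \<in> {..<N}" and eq: "vtx i = vtx k"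
  show "i = k"
  proof (cases "i < m"; cases "k < m")
    assume "i < m" "k < m"
    then show ?thesis
      using eq x_pow_inj rot_exp_less rot_exp_inj unfolding vtx_def by auto
  next
    assume "i < m" "\<not> k < m"
    moreover have "k - m < 2 * n" using ik by auto
    ultimately show ?thesis
      using eq x_pow_neq_x_pow_y[of "rot_exp i" "k - m"] rot_exp_less[of i] unfolding vtx_def by auto
  next
    assume "\<not> i < m" "k < m"
    moreover have "i - m < 2 * n" using ik by auto
    ultimately show ?thesis
      using eq x_pow_neq_x_pow_y[of "rot_exp k" "i - m"] rot_exp_less[of k] unfolding vtx_def by auto
  next
    assume "\<not> i < m" "\<not> k < m"
    then have "x [^] (i - m) = x [^] (k - m)"
      using eq x_carrier y_carrier unfolding vtx_def by simp
    moreover have "i - m < 2 * n" "k - m < 2 * n" using ik by auto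
    ultimately have "i - m = k - m" by (rule x_pow_inj[rotated 2])
    then show ?thesis using \<open>\<not> i < m\<close> \<open>\<not> k < m\<close> by arith
  qed
qed

lemma vtx_image: "vtx ` {..<N} = nc_vertices G"
proof
  have "vtx i \<notin> group_center G" for i
    using x_pow_central_iff rot_exp_mod_n x_pow_y_not_central unfolding vtx_def by auto
  then show "vtx ` {..<N} \<subseteq> nc_vertices G"
    using vtx_carrier unfolding nc_vertices_def by auto
  show "nc_vertices G \<subseteq> vtx ` {..<N}"
  proof
    fix g assume "g \<in> nc_vertices G"
    then have g: "g \<in> carrier G" "g \<notin> group_center G"
      unfolding nc_vertices_def by auto
    then obtain s where s: "s < 4 * n" "g = qelem s"
      using carrier_eq_qelem_image by auto
    show "g \<in> vtx ` {..<N}"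
    proof (cases "s < 2 * n")
      case True
      then have "s mod n \<noteq> 0"
        using s g(2) x_pow_central_iff unfolding qelem_def by auto
      then obtain i where "i < m" "rot_exp i = s"
        using rot_exp_surj True by blast
      then show ?thesis
        using s True unfolding vtx_def qelem_def by force
    next
      case False
      then have "m \<le> s - 2" "s - 2 < N" "s - 2 - m = s - 2 * n"
        using s two_le_n by auto
      then have "vtx (s - 2) = g" "s - 2 \<in> {..<N}"
        using s False unfolding vtx_def qelem_def by auto
      then show ?thesis by force
    qed
  qed
qed

lemma vtx_commute_iff:
  assumes "i < N" "k < N"
  shows "vtx i \<otimes> vtx k = vtx k \<otimes> vtx i \<longleftrightarrow>
    (i < m \<and> k < m) \<or> (m \<le> i \<and> m \<le> k \<and> (k = i \<or> k = partner i))"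
proof (cases "i < m"; cases "k < m")
  assume "i < m" "k < m"
  then show ?thesis
    using x_carrier unfolding vtx_def by (simp add: nat_pow_comm)
next
  assume "i < m" "\<not> k < m"
  then show ?thesis
    using x_pow_commute_x_pow_y_iff[of "rot_exp i" "k - m"] rot_exp_mod_n[of i]
    unfolding vtx_def by simp
next
  assume "\<not> i < m" "k < m"
  then show ?thesis
    using x_pow_commute_x_pow_y_iff[of "rot_exp k" "i - m"] rot_exp_mod_n[of k]
    unfolding vtx_def by (simp add: eq_commute[of "x [^] rot_exp k \<otimes> _"])
next
  assume "\<not> i < m" "\<not> k < m"
  then show ?thesis
    using assms x_pow_y_commute_iff mod_n_eq_iff_partner unfolding vtx_def by simp
qed

lemma nc_adj_vtx_iff:
  assumes "i < N" "k < N"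
  shows "nc_adj G (vtx i) (vtx k) \<longleftrightarrow>
    i \<noteq> k \<and> \<not> ((i < m \<and> k < m) \<or> (m \<le> i \<and> m \<le> k \<and> k = partner i))"
proof -
  have "vtx i = vtx k \<longleftrightarrow> i = k"
    using inj_on_vtx assms unfolding inj_on_def by auto
  moreover have "vtx i \<in> nc_vertices G" "vtx k \<in> nc_vertices G"
    using vtx_image assms by auto
  ultimately show ?thesis
    unfolding nc_adj_def vtx_commute_iff[OF assms] by blast
qed

lemma graph_dist_vtx:
  assumes i: "i < N" and k: "k < N"
  shows "graph_dist (nc_vertices G) (nc_adj G) (vtx i) (vtx k) = idx_dist i k"
proof -
  have V: "vtx j \<in> nc_vertices G" if "j < N" for j
    using vtx_image that by auto
  have "m < N" "0 < m" using two_le_n by auto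
  show ?thesis
  proof (cases "i = k")
    case True
    then show ?thesis using graph_dist_self V[OF i] unfolding idx_dist_def by simp
  next
    case False
    then have ne: "vtx i \<noteq> vtx k"
      using inj_on_vtx i k unfolding inj_on_def by auto
    show ?thesis
    proof (cases "(i < m \<and> k < m) \<or> (m \<le> i \<and> m \<le> k \<and> k = partner i)")
      case True
      \<comment> \<open>two powers of \<open>x\<close> are joined through \<open>y\<close> (index \<open>m\<close>), two elements of the
        coset \<open>\<langle>x\<rangle>y\<close> through \<open>x\<close> (index \<open>0\<close>)\<close>
      define w where "w = (if i < m then m else 0)"
      have "w < N" "nc_adj G (vtx i) (vtx w)" "nc_adj G (vtx w) (vtx k)"
        using True i k \<open>m < N\<close> \<open>0 < m\<close> nc_adj_vtx_iff unfolding w_def by auto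
      then have "graph_dist (nc_vertices G) (nc_adj G) (vtx i) (vtx k) = 2"
        using graph_dist_eq_2 V i k ne nc_adj_vtx_iff[OF i k] True by meson
      then show ?thesis using True False unfolding idx_dist_def by simp
    next
      case C: False
      then have "graph_dist (nc_vertices G) (nc_adj G) (vtx i) (vtx k) = 1"
        using graph_dist_eq_1 V i k ne nc_adj_vtx_iff[OF i k] False by meson
      then show ?thesis using C False unfolding idx_dist_def by simp
    qed
  qed
qed

lemma transmission_vtx:
  assumes "i < N"
  shows "real (transmission (nc_vertices G) (nc_adj G) (vtx i)) = idx_trans i"
proof -
  have "real (transmission (nc_vertices G) (nc_adj G) (vtx i))
      = (\<Sum>k<N. real (graph_dist (nc_vertices G) (nc_adj G) (vtx k) (vtx i)))"
    unfolding transmission_def vtx_image[symmetric] of_nat_sum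
    by (rule sum.reindex[OF inj_on_vtx, unfolded comp_def])
  also have "\<dots> = (\<Sum>k = 0..<N. real (idx_dist i k))"
    using assms by (simp add: graph_dist_vtx idx_dist_sym atLeast0LessThan)
  finally show ?thesis using sum_idx_dist[OF assms] by simp
qed

lemma char_poly_dist_signless_laplacian:
  assumes vs: "distinct vs" "set vs = nc_vertices G"
  shows "char_poly (dist_signless_laplacian (nc_vertices G) (nc_adj G) vs)
    = char_poly dsl_mat"
proof -
  have len: "length vs = N"
    using vs vtx_image inj_on_vtx distinct_card card_image by fastforce
  define \<sigma> where "\<sigma> i = inv_into {..<N} vtx (vs ! i)" for i
  have \<sigma>: "\<sigma> i < N \<and> vtx (\<sigma> i) = vs ! i" if "i < N" for i
  proof -
    have mem: "vs ! i \<in> vtx ` {..<N}" using that len vs(2) vtx_image nth_mem by metis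
    show ?thesis
      using inv_into_into[OF mem] f_inv_into_f[OF mem] unfolding \<sigma>_def by simp
  qed
  have inj: "inj_on \<sigma> {..<N}"
    using \<sigma> vs(1) len by (intro inj_onI) (metis lessThan_iff nth_eq_iff_index_eq)
  moreover have "\<sigma> ` {..<N} \<subseteq> {..<N}"
    using \<sigma> by auto
  ultimately have bij: "bij_betw \<sigma> {..<N} {..<N}"
    by (simp add: bij_betw_def endo_inj_surj)
  have "dist_signless_laplacian (nc_vertices G) (nc_adj G) vs = mat N N (\<lambda>(i, j). dsl_entry (\<sigma> i) (\<sigma> j))"
  proof (rule eq_matI)
    fix i j assume "i < dim_row (mat N N (\<lambda>(i, j). dsl_entry (\<sigma> i) (\<sigma> j)))"
      "j < dim_col (mat N N (\<lambda>(i, j). dsl_entry (\<sigma> i) (\<sigma> j)))"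
    then have ij: "i < N" "j < N" by auto
    then have "i = j \<longleftrightarrow> \<sigma> i = \<sigma> j" using inj unfolding inj_on_def by auto
    moreover have "vs ! i = vtx (\<sigma> i)" "vs ! j = vtx (\<sigma> j)" "\<sigma> i < N" "\<sigma> j < N"
      using \<sigma> ij by auto
    ultimately show "dist_signless_laplacian (nc_vertices G) (nc_adj G) vs $$ (i, j)
        = mat N N (\<lambda>(i, j). dsl_entry (\<sigma> i) (\<sigma> j)) $$ (i, j)"
      using ij len by (simp add: dist_signless_laplacian_def dsl_entry_def transmission_vtx graph_dist_vtx)
  qed (auto simp: dist_signless_laplacian_def len)
  then show ?thesis
    unfolding dsl_mat_def using char_poly_similar similar_mat_reindex[OF bij] by metis
qed

end

section \<open>Triangularizing the distance signless Laplacian\<close>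

text \<open>\<open>(1, (2n - 2) b)\<close> is an eigenvector for \<open>l1\<close> of the quotient matrix \<open>[[10n - 12, 2n], [2n - 2, 6n - 2]]\<close>
  of the partition into powers of \<open>x\<close> and the coset \<open>\<langle>x\<rangle>y\<close>, and \<open>l2\<close> is its other eigenvalue.\<close>

locale dsl_triangularization = quaternion_nc_index +
  fixes b l1 l2 :: real
  assumes l1_b: "(l1 - (6 * real n - 2)) * b = 1"
    and l1_eq: "l1 = 10 * real n - 12 + 2 * real n * (2 * real n - 2) * b"
    and l2_eq: "l2 = 6 * real n - 2 - 2 * real n * (2 * real n - 2) * b"
begin

definition basis_entry :: "nat \<Rightarrow> nat \<Rightarrow> real" where
  "basis_entry i j =
    (if j < m - 1 then of_bool (i = j) - of_bool (i = m - 1)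
     else if j = m - 1 then of_bool (i = m - 1) + b * of_bool (m \<le> i)
     else if j = m then of_bool (m \<le> i)
     else if j < m + n then of_bool (i = j) - of_bool (i = j + n)
     else if j = m + n then of_bool (m + n \<le> i)
     else if j < N - 1 then of_bool (i = j) - of_bool (i = j + 1)
     else of_bool (i = N - 1))"

definition basis_mat :: "real mat" where
  "basis_mat = mat N N (\<lambda>(i, j). basis_entry i j)"

definition tri_const :: "nat \<Rightarrow> real" where
  "tri_const j =
    (if j = m - 1 then 2 + 2 * real n * b else if j = m then 2 * real n
     else if j = m + n then real n else if j = N - 1 then 1 else 0)"

definition tri_terms :: "nat \<Rightarrow> (nat \<times> real) list" where
  "tri_terms j =
    (if j < m - 1 then [(j, 6 * real n - 8)]
     else if j = m - 1 then [(m - 1, l1)]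
     else if j = m then [(m - 1, 2 * real n * (2 * real n - 2)), (m, l2)]
     else if j < m + n then [(j, 4 * real n - 4)]
     else if j = m + n then [(m - 1, real n * (2 * real n - 2)),
       (m, real n + 1 - real n * (2 * real n - 2) * b), (j, 4 * real n - 4)]
     else if j < N - 1 then [(j, 4 * real n - 2), (j - n, 1), (j + 1 - n, -1)]
     else [(m - 1, 2 * real n - 2), (m, 1 - (2 * real n - 2) * b), (m + n - 1, 1),
       (N - 1, 4 * real n - 2)])"

text \<open>The indicator of the powers of \<open>x\<close> is \<open>m e\<^sub>m\<^sub>-\<^sub>1\<close> plus the sum of the first \<open>m - 1\<close> columns
  of \<open>basis_mat\<close>; its multiples produce the constant \<open>tri_const j\<close> in the rows \<open>k < m - 1\<close>.\<close>

definition tri_entry :: "nat \<Rightarrow> nat \<Rightarrow> real" where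
  "tri_entry k j = tri_const j * of_bool (k < m - 1)
     + (\<Sum>(s, c)\<leftarrow>tri_terms j. c * of_bool (k = s))"

definition tri_mat :: "real mat" where
  "tri_mat = mat N N (\<lambda>(k, j). tri_entry k j)"

lemma column_cases:
  assumes "j < N"
  obtains (rot) "j < m - 1" | (eig) "j = m - 1" | (ones) "j = m" | (antisym) "m < j" "j < m + n"
    | (half) "j = m + n" | (diff) "m + n < j" "j < N - 1" | (unit) "j = N - 1"
proof -
  have "j < m - 1 \<or> j = m - 1 \<or> j = m \<or> (m < j \<and> j < m + n) \<or> j = m + n
      \<or> (m + n < j \<and> j < N - 1) \<or> j = N - 1"
    using assms two_le_n by linarith
  then show ?thesis using that by blast
qed

lemma basis_entry_rot: "j < m - 1 \<Longrightarrow> basis_entry i j = of_bool (i = j) - of_bool (i = m - 1)"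
  unfolding basis_entry_def by simp

lemma basis_entry_eig: "basis_entry i (m - 1) = of_bool (i = m - 1) + b * of_bool (m \<le> i)"
  unfolding basis_entry_def by simp

lemma basis_entry_ones: "basis_entry i m = of_bool (m \<le> i)"
proof -
  have "\<not> m < m - 1" "m \<noteq> m - 1" using two_le_n by linarith+
  then show ?thesis unfolding basis_entry_def by (simp only: if_False if_True simp_thms)
qed

lemma basis_entry_antisym:
  assumes "m < j" "j < m + n"
  shows "basis_entry i j = of_bool (i = j) - of_bool (i = j + n)"
proof -
  have "\<not> j < m - 1" "j \<noteq> m - 1" "j \<noteq> m" using assms by linarith+
  then show ?thesis using assms unfolding basis_entry_def by (simp only: if_False if_True simp_thms)
qed

lemma basis_entry_half: "basis_entry i (m + n) = of_bool (m + n \<le> i)"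
proof -
  have "\<not> m + n < m - 1" "m + n \<noteq> m - 1" "m + n \<noteq> m" "\<not> m + n < m + n"
    using two_le_n by linarith+
  then show ?thesis unfolding basis_entry_def by (simp only: if_False if_True simp_thms)
qed

lemma basis_entry_diff:
  assumes "m + n < j" "j < N - 1"
  shows "basis_entry i j = of_bool (i = j) - of_bool (i = j + 1)"
proof -
  have "\<not> j < m - 1" "j \<noteq> m - 1" "j \<noteq> m" "\<not> j < m + n" "j \<noteq> m + n"
    using assms by linarith+
  then show ?thesis using assms unfolding basis_entry_def by (simp only: if_False if_True simp_thms)
qed

lemma basis_entry_unit: "basis_entry i (N - 1) = of_bool (i = N - 1)"
proof -
  have "\<not> N - 1 < m - 1" "N - 1 \<noteq> m - 1" "N - 1 \<noteq> m" "\<not> N - 1 < m + n"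
    "N - 1 \<noteq> m + n" "\<not> N - 1 < N - 1"
    using two_le_n by linarith+
  then show ?thesis unfolding basis_entry_def by (simp only: if_False if_True simp_thms)
qed

lemma basis_col_sum:
  assumes "j < N"
  shows "(\<Sum>k = 0..<N. basis_entry k j) =
    (if j = m - 1 then 1 + 2 * real n * b else if j = m then 2 * real n
     else if j = m + n then real n else if j = N - 1 then 1 else 0)"
  using assms
proof (cases rule: column_cases)
  case rot
  moreover have "j \<noteq> m - 1" "j \<noteq> m" "j \<noteq> m + n" "j \<noteq> N - 1" "m - 1 < N"
    using rot two_le_n by linarith+
  ultimately show ?thesis by (simp add: basis_entry_rot sum_subtractf sum_upt_of_bool_eq)
next
  case eig
  moreover have "m - 1 < N" "N - m = 2 * n" using two_le_n by linarith+
  ultimately show ?thesis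
    unfolding eig basis_entry_eig
    by (simp add: sum.distrib sum_upt_of_bool_eq sum_distrib_left[symmetric] sum_upt_of_bool_ge)
next
  case ones
  moreover have "m \<noteq> m - 1" "N - m = 2 * n" using two_le_n by linarith+
  ultimately show ?thesis unfolding ones basis_entry_ones by (simp add: sum_upt_of_bool_ge)
next
  case antisym
  moreover have "j \<noteq> m - 1" "j \<noteq> m" "j \<noteq> m + n" "j \<noteq> N - 1" "j + n < N"
    using antisym two_le_n by linarith+
  ultimately show ?thesis by (simp add: basis_entry_antisym sum_subtractf sum_upt_of_bool_eq)
next
  case half
  moreover have "m + n \<noteq> m - 1" "m + n \<noteq> m" "N - (m + n) = n" using two_le_n by linarith+
  ultimately show ?thesis unfolding half basis_entry_half by (simp add: sum_upt_of_bool_ge)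
next
  case diff
  moreover have "j \<noteq> m - 1" "j \<noteq> m" "j \<noteq> m + n" "j \<noteq> N - 1" "j + 1 < N"
    using diff two_le_n by linarith+
  ultimately show ?thesis by (simp add: basis_entry_diff sum_subtractf sum_upt_of_bool_eq)
next
  case unit
  moreover have "N - 1 \<noteq> m - 1" "N - 1 \<noteq> m" "N - 1 \<noteq> m + n" "N - 1 < N"
    using two_le_n by linarith+
  ultimately show ?thesis unfolding unit basis_entry_unit by (simp add: sum_upt_of_bool_eq)
qed

lemma basis_col_sum_rot:
  assumes "j < N"
  shows "(\<Sum>k = 0..<m. basis_entry k j) = of_bool (j = m - 1)"
  using assms
proof (cases rule: column_cases)
  case rot
  moreover have "j \<noteq> m - 1" "j < m" "m - 1 < m" using rot two_le_n by linarith+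
  ultimately show ?thesis by (simp add: basis_entry_rot sum_subtractf sum_upt_of_bool_eq)
next
  case eig
  moreover have "m - 1 < m" "{0..<m} \<inter> {k. m \<le> k} = {}" using two_le_n by auto
  ultimately show ?thesis
    unfolding eig basis_entry_eig by (simp add: sum.distrib sum_upt_of_bool_eq)
next
  case ones
  moreover have "m \<noteq> m - 1" "{0..<m} \<inter> {k. m \<le> k} = {}" using two_le_n by auto
  ultimately show ?thesis unfolding ones basis_entry_ones by simp
next
  case antisym
  moreover have "j \<noteq> m - 1" "\<not> j < m" "\<not> j + n < m" using antisym by linarith+
  ultimately show ?thesis by (simp add: basis_entry_antisym sum_subtractf sum_upt_of_bool_eq)
next
  case half
  moreover have "m + n \<noteq> m - 1" "{0..<m} \<inter> {k. m + n \<le> k} = {}" using two_le_n by auto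
  ultimately show ?thesis unfolding half basis_entry_half by simp
next
  case diff
  moreover have "j \<noteq> m - 1" "\<not> j < m" "\<not> j + 1 < m" using diff by linarith+
  ultimately show ?thesis by (simp add: basis_entry_diff sum_subtractf sum_upt_of_bool_eq)
next
  case unit
  moreover have "N - 1 \<noteq> m - 1" "\<not> N - 1 < m" using two_le_n by linarith+
  ultimately show ?thesis unfolding unit basis_entry_unit by (simp add: sum_upt_of_bool_eq)
qed

lemma tri_col_rot:
  assumes j: "j < m - 1"
  shows "tri_const j = 0" "tri_terms j = [(j, 6 * real n - 8)]"
proof -
  have "j \<noteq> m - 1" "j \<noteq> m" "j \<noteq> m + n" "j \<noteq> N - 1" using j by linarith+
  then show "tri_const j = 0" "tri_terms j = [(j, 6 * real n - 8)]"
    using j unfolding tri_const_def tri_terms_def by (simp_all only: if_False if_True simp_thms)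
qed

lemma tri_col_eig: "tri_const (m - 1) = 2 + 2 * real n * b" "tri_terms (m - 1) = [(m - 1, l1)]"
  unfolding tri_const_def tri_terms_def by simp_all

lemma tri_col_ones:
  "tri_const m = 2 * real n" "tri_terms m = [(m - 1, 2 * real n * (2 * real n - 2)), (m, l2)]"
proof -
  have "m \<noteq> m - 1" "\<not> m < m - 1" using two_le_n by linarith+
  then show "tri_const m = 2 * real n" "tri_terms m = [(m - 1, 2 * real n * (2 * real n - 2)), (m, l2)]"
    unfolding tri_const_def tri_terms_def by (simp_all only: if_False if_True simp_thms)
qed

lemma tri_col_antisym:
  assumes j: "m < j" "j < m + n"
  shows "tri_const j = 0" "tri_terms j = [(j, 4 * real n - 4)]"
proof -
  have "j \<noteq> m - 1" "\<not> j < m - 1" "j \<noteq> m" "j \<noteq> m + n" "j \<noteq> N - 1" using j by linarith+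
  then show "tri_const j = 0" "tri_terms j = [(j, 4 * real n - 4)]"
    using j unfolding tri_const_def tri_terms_def by (simp_all only: if_False if_True simp_thms)
qed

lemma tri_col_half:
  "tri_const (m + n) = real n"
  "tri_terms (m + n) = [(m - 1, real n * (2 * real n - 2)),
     (m, real n + 1 - real n * (2 * real n - 2) * b), (m + n, 4 * real n - 4)]"
proof -
  have "m + n \<noteq> m - 1" "\<not> m + n < m - 1" "m + n \<noteq> m" "\<not> m + n < m + n" using two_le_n by linarith+
  then show "tri_const (m + n) = real n"
    "tri_terms (m + n) = [(m - 1, real n * (2 * real n - 2)),
       (m, real n + 1 - real n * (2 * real n - 2) * b), (m + n, 4 * real n - 4)]"
    unfolding tri_const_def tri_terms_def by (simp_all only: if_False if_True simp_thms)
qed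

lemma tri_col_diff:
  assumes j: "m + n < j" "j < N - 1"
  shows "tri_const j = 0" "tri_terms j = [(j, 4 * real n - 2), (j - n, 1), (j + 1 - n, -1)]"
proof -
  have "j \<noteq> m - 1" "\<not> j < m - 1" "j \<noteq> m" "\<not> j < m + n" "j \<noteq> m + n" "j \<noteq> N - 1"
    using j by linarith+
  then show "tri_const j = 0" "tri_terms j = [(j, 4 * real n - 2), (j - n, 1), (j + 1 - n, -1)]"
    using j unfolding tri_const_def tri_terms_def by (simp_all only: if_False if_True simp_thms)
qed

lemma tri_col_unit:
  "tri_const (N - 1) = 1"
  "tri_terms (N - 1) = [(m - 1, 2 * real n - 2), (m, 1 - (2 * real n - 2) * b), (m + n - 1, 1),
     (N - 1, 4 * real n - 2)]"
proof -
  have "N - 1 \<noteq> m - 1" "\<not> N - 1 < m - 1" "N - 1 \<noteq> m" "\<not> N - 1 < m + n" "N - 1 \<noteq> m + n"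
    "\<not> N - 1 < N - 1"
    using two_le_n by linarith+
  then show "tri_const (N - 1) = 1"
    "tri_terms (N - 1) = [(m - 1, 2 * real n - 2), (m, 1 - (2 * real n - 2) * b), (m + n - 1, 1),
       (N - 1, 4 * real n - 2)]"
    unfolding tri_const_def tri_terms_def by (simp_all only: if_False if_True simp_thms)
qed

lemma tri_terms_le:
  assumes j: "j < N" and s: "(s, c) \<in> set (tri_terms j)"
  shows "s \<le> j"
  using j
proof (cases rule: column_cases)
  case rot
  then show ?thesis using s tri_col_rot by auto
next
  case eig
  then show ?thesis using s tri_col_eig by auto
next
  case ones
  then show ?thesis using s tri_col_ones by auto
next
  case antisym
  then show ?thesis using s tri_col_antisym by auto
next
  case half
  then show ?thesis using s tri_col_half two_le_n by auto
next
  case diff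
  then show ?thesis using s tri_col_diff by auto
next
  case unit
  then show ?thesis using s tri_col_unit two_le_n by auto
qed

lemma tri_const_eq_0: "j < m - 1 \<Longrightarrow> tri_const j = 0"
  unfolding tri_const_def by auto

lemma dsl_basis_entry:
  assumes i: "i < N" and j: "j < N"
  shows "(dsl_mat * basis_mat) $$ (i, j) = (\<Sum>k = 0..<N. basis_entry k j)
    + (if i < m then (6 * real n - 8) * basis_entry i j + (\<Sum>k = 0..<m. basis_entry k j)
       else (4 * real n - 3) * basis_entry i j + basis_entry (partner i) j)"
proof -
  have "(dsl_mat * basis_mat) $$ (i, j) = (\<Sum>k = 0..<N. dsl_entry i k * basis_entry k j)"
    using i j by (simp add: dsl_mat_def basis_mat_def scalar_prod_def)
  then show ?thesis
    using dsl_mult_rot[of i "\<lambda>k. basis_entry k j"] dsl_mult_refl[of i "\<lambda>k. basis_entry k j"] i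
    by auto
qed

lemma basis_tri_entry:
  assumes i: "i < N" and j: "j < N"
  shows "(basis_mat * tri_mat) $$ (i, j)
    = tri_const j * (of_bool (i < m - 1) - (2 * real n - 3) * of_bool (i = m - 1))
      + (\<Sum>(s, c)\<leftarrow>tri_terms j. c * basis_entry i s)"
proof -
  have "(basis_mat * tri_mat) $$ (i, j) = (\<Sum>k = 0..<N. basis_entry i k * tri_entry k j)"
    using i j by (simp add: tri_mat_def basis_mat_def scalar_prod_def)
  also have "\<dots> = tri_const j * (\<Sum>k = 0..<N. basis_entry i k * of_bool (k < m - 1))
      + (\<Sum>k = 0..<N. basis_entry i k * (\<Sum>(s, c)\<leftarrow>tri_terms j. c * of_bool (k = s)))"
    by (simp add: tri_entry_def distrib_left sum.distrib sum_distrib_left ac_simps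
        del: sum_mult_of_bool_eq)
  also have "(\<Sum>k = 0..<N. basis_entry i k * of_bool (k < m - 1)) = (\<Sum>k = 0..<m - 1. basis_entry i k)"
    by (rule sum_upt_mult_of_bool_less) simp
  also have "\<dots> = (\<Sum>k = 0..<m - 1. of_bool (k = i) - of_bool (i = m - 1))"
    by (intro sum.cong) (auto simp: basis_entry_rot)
  also have "\<dots> = of_bool (i < m - 1) - (2 * real n - 3) * of_bool (i = m - 1)"
    using two_le_n by (simp add: sum_subtractf sum_upt_of_bool_eq of_nat_diff)
  also have "(\<Sum>k = 0..<N. basis_entry i k * (\<Sum>(s, c)\<leftarrow>tri_terms j. c * of_bool (k = s)))
      = (\<Sum>(s, c)\<leftarrow>tri_terms j. c * basis_entry i s)"
    using tri_terms_le[OF j] j by (intro sum_upt_mult_sum_list_of_bool) fastforce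
  finally show ?thesis .
qed

lemma row_cases:
  assumes "i < N"
  obtains (rot) "i < m - 1" | (eig) "i = m - 1" | (refl) "m \<le> i"
  using assms two_le_n by linarith

lemma intertwine_rot:
  assumes i: "i < N" and j: "j < m - 1"
  shows "(dsl_mat * basis_mat) $$ (i, j) = (basis_mat * tri_mat) $$ (i, j)"
proof -
  have jN: "j < N" using j by linarith
  have ne: "j \<noteq> m - 1" "j \<noteq> m" "j \<noteq> m + n" "j \<noteq> N - 1" using j by linarith+
  then have sums: "(\<Sum>k = 0..<N. basis_entry k j) = 0" "(\<Sum>k = 0..<m. basis_entry k j) = 0"
    using basis_col_sum[OF jN] basis_col_sum_rot[OF jN] by (simp_all only: ne if_False if_True simp_thms of_bool_eq)
  show ?thesis
  proof (cases "i < m")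
    case True
    then show ?thesis
      unfolding dsl_basis_entry[OF i jN] basis_tri_entry[OF i jN] sums tri_col_rot[OF j]
      by (simp add: basis_entry_rot[OF j])
  next
    case False
    then have "i \<noteq> j" "i \<noteq> m - 1" "partner i \<noteq> j" "partner i \<noteq> m - 1"
      using partner_range[OF _ i] j by fastforce+
    with False show ?thesis
      unfolding dsl_basis_entry[OF i jN] basis_tri_entry[OF i jN] sums tri_col_rot[OF j]
      by (simp add: basis_entry_rot[OF j])
  qed
qed

lemma intertwine_eig:
  assumes i: "i < N"
  shows "(dsl_mat * basis_mat) $$ (i, m - 1) = (basis_mat * tri_mat) $$ (i, m - 1)"
proof -
  have jN: "m - 1 < N" using two_le_n by linarith
  have sums: "(\<Sum>k = 0..<N. basis_entry k (m - 1)) = 1 + 2 * real n * b"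
    "(\<Sum>k = 0..<m. basis_entry k (m - 1)) = 1"
    using basis_col_sum[OF jN] basis_col_sum_rot[OF jN] by (simp_all only: if_True simp_thms of_bool_eq)
  show ?thesis
    using i
  proof (cases rule: row_cases)
    case rot
    then have "i < m" "i \<noteq> m - 1" "\<not> m \<le> i" by linarith+
    with rot show ?thesis
      unfolding dsl_basis_entry[OF i jN] basis_tri_entry[OF i jN] sums tri_col_eig list.map
        prod.case sum_list.Cons sum_list.Nil
      unfolding basis_entry_eig
      by simp
  next
    case eig
    then have "i < m" "\<not> m \<le> i" "\<not> i < m - 1" using two_le_n by linarith+
    with eig show ?thesis
      unfolding dsl_basis_entry[OF i jN] basis_tri_entry[OF i jN] sums tri_col_eig list.map
        prod.case sum_list.Cons sum_list.Nil
      unfolding basis_entry_eig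
      by (simp add: l1_eq algebra_simps)
  next
    case refl
    then have "\<not> i < m" "i \<noteq> m - 1" "\<not> i < m - 1" "m \<le> partner i" "partner i \<noteq> m - 1"
      using partner_range[OF refl i] two_le_n by linarith+
    with refl show ?thesis
      unfolding dsl_basis_entry[OF i jN] basis_tri_entry[OF i jN] sums tri_col_eig list.map
        prod.case sum_list.Cons sum_list.Nil
      unfolding basis_entry_eig
      using l1_b by (simp add: algebra_simps)
  qed
qed

lemma intertwine_ones:
  assumes i: "i < N"
  shows "(dsl_mat * basis_mat) $$ (i, m) = (basis_mat * tri_mat) $$ (i, m)"
proof -
  have jN: "m < N" and ne: "m \<noteq> m - 1" using two_le_n by linarith+
  then have sums: "(\<Sum>k = 0..<N. basis_entry k m) = 2 * real n" "(\<Sum>k = 0..<m. basis_entry k m) = 0"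
    using basis_col_sum[OF jN] basis_col_sum_rot[OF jN] by (simp_all only: ne if_False if_True simp_thms of_bool_eq)
  show ?thesis
    using i
  proof (cases rule: row_cases)
    case rot
    then have "i < m" "i \<noteq> m - 1" "\<not> m \<le> i" by linarith+
    with rot show ?thesis
      unfolding dsl_basis_entry[OF i jN] basis_tri_entry[OF i jN] sums tri_col_ones list.map
        prod.case sum_list.Cons sum_list.Nil
      unfolding basis_entry_eig basis_entry_ones by simp
  next
    case eig
    then have "i < m" "\<not> m \<le> i" "\<not> i < m - 1" using two_le_n by linarith+
    with eig two_le_n show ?thesis
      unfolding dsl_basis_entry[OF i jN] basis_tri_entry[OF i jN] sums tri_col_ones list.map
        prod.case sum_list.Cons sum_list.Nil
      unfolding basis_entry_eig basis_entry_ones by (simp add: algebra_simps)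
  next
    case refl
    then have "\<not> i < m" "i \<noteq> m - 1" "\<not> i < m - 1" "m \<le> partner i"
      using partner_range[OF refl i] two_le_n by linarith+
    with refl show ?thesis
      unfolding dsl_basis_entry[OF i jN] basis_tri_entry[OF i jN] sums tri_col_ones list.map
        prod.case sum_list.Cons sum_list.Nil
      unfolding basis_entry_eig basis_entry_ones by (simp add: l2_eq algebra_simps)
  qed
qed

lemma intertwine_antisym:
  assumes i: "i < N" and j: "m < j" "j < m + n"
  shows "(dsl_mat * basis_mat) $$ (i, j) = (basis_mat * tri_mat) $$ (i, j)"
proof -
  have jN: "j < N" using j by linarith
  have ne: "j \<noteq> m - 1" "j \<noteq> m" "j \<noteq> m + n" "j \<noteq> N - 1" using j by linarith+
  then have sums: "(\<Sum>k = 0..<N. basis_entry k j) = 0" "(\<Sum>k = 0..<m. basis_entry k j) = 0"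
    using basis_col_sum[OF jN] basis_col_sum_rot[OF jN] by (simp_all only: ne if_False if_True simp_thms of_bool_eq)
  show ?thesis
  proof (cases "i < m")
    case True
    then have "i \<noteq> j" "i \<noteq> j + n" using j by linarith+
    with True show ?thesis
      unfolding dsl_basis_entry[OF i jN] basis_tri_entry[OF i jN] sums tri_col_antisym[OF j]
      by (simp add: basis_entry_antisym[OF j])
  next
    case False
    then have "partner i = j \<longleftrightarrow> i = j + n" "partner i = j + n \<longleftrightarrow> i = j"
      using i j unfolding partner_def by auto
    with False show ?thesis
      unfolding dsl_basis_entry[OF i jN] basis_tri_entry[OF i jN] sums tri_col_antisym[OF j]
      by (simp add: basis_entry_antisym[OF j] algebra_simps)
  qed
qed

lemma intertwine_half:
  assumes i: "i < N"
  shows "(dsl_mat * basis_mat) $$ (i, m + n) = (basis_mat * tri_mat) $$ (i, m + n)"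
proof -
  have jN: "m + n < N" and ne: "m + n \<noteq> m - 1" "m + n \<noteq> m" using two_le_n by linarith+
  then have sums: "(\<Sum>k = 0..<N. basis_entry k (m + n)) = real n" "(\<Sum>k = 0..<m. basis_entry k (m + n)) = 0"
    using basis_col_sum[OF jN] basis_col_sum_rot[OF jN] by (simp_all only: ne if_False if_True simp_thms of_bool_eq)
  show ?thesis
    using i
  proof (cases rule: row_cases)
    case rot
    then have "i < m" "i \<noteq> m - 1" "\<not> m \<le> i" "\<not> m + n \<le> i" by linarith+
    with rot show ?thesis
      unfolding dsl_basis_entry[OF i jN] basis_tri_entry[OF i jN] sums tri_col_half list.map
        prod.case sum_list.Cons sum_list.Nil
      unfolding basis_entry_eig basis_entry_ones basis_entry_half by simp
  next
    case eig
    then have "i < m" "\<not> m \<le> i" "\<not> i < m - 1" "\<not> m + n \<le> i" using two_le_n by linarith+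
    with eig two_le_n show ?thesis
      unfolding dsl_basis_entry[OF i jN] basis_tri_entry[OF i jN] sums tri_col_half list.map
        prod.case sum_list.Cons sum_list.Nil
      unfolding basis_entry_eig basis_entry_ones basis_entry_half by (simp add: algebra_simps)
  next
    case refl
    then have "\<not> i < m" "i \<noteq> m - 1" "\<not> i < m - 1" "m \<le> partner i"
      "of_bool (m + n \<le> partner i) = (1 :: real) - of_bool (m + n \<le> i)"
      using partner_range[OF refl i] two_le_n i unfolding partner_def by auto
    with refl show ?thesis
      unfolding dsl_basis_entry[OF i jN] basis_tri_entry[OF i jN] sums tri_col_half list.map
        prod.case sum_list.Cons sum_list.Nil
      unfolding basis_entry_eig basis_entry_ones basis_entry_half by (simp add: algebra_simps)
  qed
qed

lemma intertwine_diff: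
  assumes i: "i < N" and j: "m + n < j" "j < N - 1"
  shows "(dsl_mat * basis_mat) $$ (i, j) = (basis_mat * tri_mat) $$ (i, j)"
proof -
  have jN: "j < N" using j by linarith
  have ne: "j \<noteq> m - 1" "j \<noteq> m" "j \<noteq> m + n" "j \<noteq> N - 1" using j by linarith+
  then have sums: "(\<Sum>k = 0..<N. basis_entry k j) = 0" "(\<Sum>k = 0..<m. basis_entry k j) = 0"
    using basis_col_sum[OF jN] basis_col_sum_rot[OF jN] by (simp_all only: ne if_False if_True simp_thms of_bool_eq)
  have j1: "m < j - n" "j - n < m + n" and j2: "m < j + 1 - n" "j + 1 - n < m + n"
    and jn: "j - n + n = j" "j + 1 - n + n = j + 1"
    using j by linarith+
  have antisym: "basis_entry k (j - n) = of_bool (k = j - n) - of_bool (k = j)"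
    "basis_entry k (j + 1 - n) = of_bool (k = j + 1 - n) - of_bool (k = j + 1)" for k
    using basis_entry_antisym[OF j1, of k] basis_entry_antisym[OF j2, of k] unfolding jn by simp_all
  show ?thesis
  proof (cases "i < m")
    case True
    then have "i \<noteq> j" "i \<noteq> j + 1" "i \<noteq> j - n" "i \<noteq> j + 1 - n" using j by linarith+
    with True show ?thesis
      unfolding dsl_basis_entry[OF i jN] basis_tri_entry[OF i jN] sums tri_col_diff[OF j] list.map
        prod.case sum_list.Cons sum_list.Nil antisym
      by (simp add: basis_entry_diff[OF j])
  next
    case False
    then have "partner i = j \<longleftrightarrow> i = j - n" "partner i = j + 1 \<longleftrightarrow> i = j + 1 - n"
      using i j unfolding partner_def by auto
    with False show ?thesis
      unfolding dsl_basis_entry[OF i jN] basis_tri_entry[OF i jN] sums tri_col_diff[OF j] list.map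
        prod.case sum_list.Cons sum_list.Nil antisym
      by (simp add: basis_entry_diff[OF j] algebra_simps)
  qed
qed

lemma intertwine_unit:
  assumes i: "i < N"
  shows "(dsl_mat * basis_mat) $$ (i, N - 1) = (basis_mat * tri_mat) $$ (i, N - 1)"
proof -
  have jN: "N - 1 < N" and ne: "N - 1 \<noteq> m - 1" "N - 1 \<noteq> m" "N - 1 \<noteq> m + n"
    using two_le_n by linarith+
  then have sums: "(\<Sum>k = 0..<N. basis_entry k (N - 1)) = 1" "(\<Sum>k = 0..<m. basis_entry k (N - 1)) = 0"
    using basis_col_sum[OF jN] basis_col_sum_rot[OF jN] by (simp_all only: ne if_False if_True simp_thms of_bool_eq)
  have j1: "m < m + n - 1" "m + n - 1 < m + n" and jn: "m + n - 1 + n = N - 1"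
    using two_le_n by linarith+
  have antisym: "basis_entry k (m + n - 1) = of_bool (k = m + n - 1) - of_bool (k = N - 1)" for k
    using basis_entry_antisym[OF j1, of k] unfolding jn .
  show ?thesis
    using i
  proof (cases rule: row_cases)
    case rot
    then have "i < m" "i \<noteq> m - 1" "\<not> m \<le> i" "i \<noteq> N - 1" "i \<noteq> m + n - 1" by linarith+
    with rot show ?thesis
      unfolding dsl_basis_entry[OF i jN] basis_tri_entry[OF i jN] sums tri_col_unit list.map
        prod.case sum_list.Cons sum_list.Nil antisym
      unfolding basis_entry_eig basis_entry_ones basis_entry_unit by simp
  next
    case eig
    then have "i < m" "\<not> m \<le> i" "\<not> i < m - 1" "i \<noteq> N - 1" "i \<noteq> m + n - 1"
      using two_le_n by linarith+
    with eig two_le_n show ?thesis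
      unfolding dsl_basis_entry[OF i jN] basis_tri_entry[OF i jN] sums tri_col_unit list.map
        prod.case sum_list.Cons sum_list.Nil antisym
      unfolding basis_entry_eig basis_entry_ones basis_entry_unit by (simp add: algebra_simps)
  next
    case refl
    then have "\<not> i < m" "i \<noteq> m - 1" "\<not> i < m - 1" "m \<le> partner i"
      using partner_range[OF refl i] two_le_n by linarith+
    moreover have "partner i = N - 1 \<longleftrightarrow> i = m + n - 1"
      using refl i two_le_n unfolding partner_def by (cases "i < m + n"; simp; linarith)
    ultimately show ?thesis
      using refl
      unfolding dsl_basis_entry[OF i jN] basis_tri_entry[OF i jN] sums tri_col_unit list.map
        prod.case sum_list.Cons sum_list.Nil antisym
      unfolding basis_entry_eig basis_entry_ones basis_entry_unit by (simp add: algebra_simps)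
  qed
qed

lemma dsl_basis_eq_basis_tri: "dsl_mat * basis_mat = basis_mat * tri_mat"
proof (rule eq_matI)
  fix i j assume "i < dim_row (basis_mat * tri_mat)" "j < dim_col (basis_mat * tri_mat)"
  then have i: "i < N" and j: "j < N" by (auto simp: basis_mat_def tri_mat_def)
  from j show "(dsl_mat * basis_mat) $$ (i, j) = (basis_mat * tri_mat) $$ (i, j)"
  proof (cases rule: column_cases)
    case rot
    then show ?thesis by (rule intertwine_rot[OF i])
  next
    case eig
    then show ?thesis using intertwine_eig[OF i] by simp
  next
    case ones
    then show ?thesis using intertwine_ones[OF i] by simp
  next
    case antisym
    then show ?thesis by (rule intertwine_antisym[OF i])
  next
    case half
    then show ?thesis using intertwine_half[OF i] by simp
  next
    case diff
    then show ?thesis by (rule intertwine_diff[OF i])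
  next
    case unit
    then show ?thesis using intertwine_unit[OF i] by simp
  qed
qed (auto simp: dsl_mat_def basis_mat_def tri_mat_def)

lemma basis_entry_upper: "i < j \<Longrightarrow> j < N \<Longrightarrow> basis_entry i j = 0"
  and basis_entry_diag: "j < N \<Longrightarrow> basis_entry j j = 1"
proof -
  assume j: "j < N"
  from j show "basis_entry j j = 1"
  proof (cases rule: column_cases)
    case eig
    have "\<not> m \<le> m - 1" using two_le_n by linarith
    then show ?thesis unfolding eig basis_entry_eig by simp
  next
    case ones
    then show ?thesis unfolding ones basis_entry_ones by simp
  next
    case half
    then show ?thesis unfolding half basis_entry_half by simp
  next
    case unit
    then show ?thesis unfolding unit basis_entry_unit by simp
  qed (simp_all add: basis_entry_rot basis_entry_antisym basis_entry_diff)
  assume ij: "i < j"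
  from j show "basis_entry i j = 0"
  proof (cases rule: column_cases)
    case eig
    have "i \<noteq> m - 1" "\<not> m \<le> i" using ij eig by linarith+
    then show ?thesis unfolding eig basis_entry_eig by simp
  next
    case ones
    then show ?thesis using ij unfolding ones basis_entry_ones by simp
  next
    case half
    then show ?thesis using ij unfolding half basis_entry_half by simp
  next
    case unit
    then show ?thesis using ij unfolding unit basis_entry_unit by simp
  qed (use ij in \<open>simp_all add: basis_entry_rot basis_entry_antisym basis_entry_diff\<close>)
qed

lemma det_basis_mat: "det basis_mat = 1"
proof -
  have "det basis_mat = prod_list (diag_mat basis_mat)"
    by (rule det_lower_triangular[of N]) (auto simp: basis_mat_def basis_entry_upper)
  also have "diag_mat basis_mat = replicate N 1"
    unfolding diag_mat_def by (rule nth_equalityI) (auto simp: basis_mat_def basis_entry_diag)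
  finally show ?thesis by simp
qed

lemma upper_triangular_tri_mat: "upper_triangular tri_mat"
proof -
  have "tri_entry k j = 0" if "j < k" "j < N" for j k
  proof -
    have "tri_const j * of_bool (k < m - 1) = 0"
      using that tri_const_eq_0[of j] by (cases "j < m - 1") auto
    moreover have "(\<Sum>(s, c)\<leftarrow>tri_terms j. c * of_bool (k = s)) = (\<Sum>_\<leftarrow>tri_terms j. 0)"
      using tri_terms_le[OF that(2)] that(1)
      by (intro arg_cong[where f = sum_list] map_cong) fastforce+
    ultimately show ?thesis unfolding tri_entry_def by simp
  qed
  then show ?thesis
    unfolding upper_triangular_def by (auto simp: tri_mat_def)
qed

lemma tri_entry_diag_rot: "i < m - 1 \<Longrightarrow> tri_entry i i = 6 * real n - 8"
  by (simp add: tri_entry_def tri_col_rot)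

lemma tri_entry_diag_eig: "tri_entry (m - 1) (m - 1) = l1"
  unfolding tri_entry_def tri_col_eig by simp

lemma tri_entry_diag_ones: "tri_entry m m = l2"
proof -
  have "\<not> m < m - 1" "m \<noteq> m - 1" using two_le_n by linarith+
  then show ?thesis unfolding tri_entry_def tri_col_ones by simp
qed

lemma tri_entry_diag_antisym: "m < i \<Longrightarrow> i \<le> m + n \<Longrightarrow> tri_entry i i = 4 * real n - 4"
proof -
  assume i: "m < i" "i \<le> m + n"
  show ?thesis
  proof (cases "i = m + n")
    case True
    have "\<not> m + n < m - 1" "m + n \<noteq> m - 1" "m + n \<noteq> m" using two_le_n by linarith+
    then show ?thesis unfolding True tri_entry_def tri_col_half by simp
  next
    case False
    then have "i < m + n" "\<not> i < m - 1" using i by linarith+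
    with i show ?thesis by (simp add: tri_entry_def tri_col_antisym)
  qed
qed

lemma tri_entry_diag_diff: "m + n < i \<Longrightarrow> i < N \<Longrightarrow> tri_entry i i = 4 * real n - 2"
proof -
  assume i: "m + n < i" "i < N"
  show ?thesis
  proof (cases "i = N - 1")
    case True
    have "\<not> N - 1 < m - 1" "N - 1 \<noteq> m - 1" "N - 1 \<noteq> m" "N - 1 \<noteq> m + n - 1"
      using two_le_n by linarith+
    then show ?thesis unfolding True tri_entry_def tri_col_unit by simp
  next
    case False
    then have "i < N - 1" "\<not> i < m - 1" "i \<noteq> i - n" "i \<noteq> i + 1 - n" using i two_le_n by linarith+
    with i show ?thesis by (simp add: tri_entry_def tri_col_diff)
  qed
qed

lemma mset_diag_tri_mat:
  "mset (diag_mat tri_mat) = replicate_mset (2 * n - 3) (6 * real n - 8) + {#l1, l2#}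
     + replicate_mset n (4 * real n - 4) + replicate_mset (n - 1) (4 * real n - 2)"
proof -
  let ?d = "\<lambda>j. tri_entry j j"
  have "diag_mat tri_mat = map ?d [0..<N]"
    unfolding diag_mat_def by (simp add: tri_mat_def)
  also have "[0..<N] = [0..<m - 1] @ [m - 1..<m] @ [m..<m + 1] @ [m + 1..<m + n + 1] @ [m + n + 1..<N]"
  proof -
    have "[0..<N] = [0..<m - 1] @ [m - 1..<N]" "[m - 1..<N] = [m - 1..<m] @ [m..<N]"
      "[m..<N] = [m..<m + 1] @ [m + 1..<N]" "[m + 1..<N] = [m + 1..<m + n + 1] @ [m + n + 1..<N]"
      by (rule upt_eq_append; use two_le_n in linarith)+
    then show ?thesis by simp
  qed
  also have "map ?d ([0..<m - 1] @ [m - 1..<m] @ [m..<m + 1] @ [m + 1..<m + n + 1] @ [m + n + 1..<N])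
      = map ?d [0..<m - 1] @ map ?d [m - 1..<m] @ map ?d [m..<m + 1] @ map ?d [m + 1..<m + n + 1]
        @ map ?d [m + n + 1..<N]"
    by simp
  also have "map ?d [0..<m - 1] = replicate (2 * n - 3) (6 * real n - 8)"
    using map_upt_eq_replicate[of 0 "m - 1" ?d] by (simp add: tri_entry_diag_rot)
  also have "map ?d [m - 1..<m] = [l1]"
  proof -
    have "Suc (m - 1) = m" using two_le_n by simp
    moreover have "[m - 1..<Suc (m - 1)] = [m - 1]" by simp
    ultimately show ?thesis using tri_entry_diag_eig by simp
  qed
  also have "map ?d [m..<m + 1] = [l2]"
    by (simp add: tri_entry_diag_ones)
  also have "map ?d [m + 1..<m + n + 1] = replicate n (4 * real n - 4)"
    using map_upt_eq_replicate[of "m + 1" "m + n + 1" ?d] by (simp add: tri_entry_diag_antisym)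
  also have "map ?d [m + n + 1..<N] = replicate (n - 1) (4 * real n - 2)"
    using map_upt_eq_replicate[of "m + n + 1" N ?d] two_le_n by (simp add: tri_entry_diag_diff)
  finally show ?thesis by (simp add: add.assoc)
qed

lemma char_poly_dsl_mat:
  "char_poly dsl_mat = poly_of_roots (replicate_mset (2 * n - 3) (6 * real n - 8) + {#l1, l2#}
     + replicate_mset n (4 * real n - 4) + replicate_mset (n - 1) (4 * real n - 2))"
proof -
  have "similar_mat dsl_mat tri_mat"
    using dsl_basis_eq_basis_tri det_basis_mat
    by (intro similar_mat_intertwined[of _ N basis_mat]) (auto simp: dsl_mat_def basis_mat_def tri_mat_def)
  then have "char_poly dsl_mat = char_poly tri_mat"
    by (rule char_poly_similar)
  also have "\<dots> = (\<Prod>a\<leftarrow>diag_mat tri_mat. [:- a, 1:])"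
    using upper_triangular_tri_mat by (intro char_poly_upper_triangular[of _ N]) (simp add: tri_mat_def)
  also have "\<dots> = poly_of_roots (mset (diag_mat tri_mat))"
    by (simp add: poly_of_roots_def prod_mset_prod_list[symmetric])
  finally show ?thesis unfolding mset_diag_tri_mat .
qed

end

lemma dsl_triangularization_from_roots:
  fixes t1 t2 :: real
  assumes n: "2 \<le> n"
    and roots: "\<forall>s::real. (2 * real n - 2) * s\<^sup>2 + (- 4 * real n + 10) * s - 2 * real n
                  = (2 * real n - 2) * (s - t1) * (s - t2)"
  shows "dsl_triangularization n (1 / ((2 * real n - 2) * t1))
    (t1 * (2 * real n - 2) + (6 * real n - 2)) (t2 * (2 * real n - 2) + (6 * real n - 2))"
proof -
  define b where "b = 1 / ((2 * real n - 2) * t1)"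
  have pos: "2 * real n - 2 > 0" using n by simp
  have prod: "(2 * real n - 2) * t1 * t2 = - 2 * real n"
    using spec[OF roots, of 0] by simp
  have root: "(2 * real n - 2) * t1\<^sup>2 + (- 4 * real n + 10) * t1 - 2 * real n = 0"
    using spec[OF roots, of t1] by simp
  have t1: "t1 \<noteq> 0" using prod n by auto
  have "t1 * (2 * real n - 2) * b = 1"
    unfolding b_def using pos t1 by (simp add: field_simps)
  moreover have "t1 * (2 * real n - 2) + (6 * real n - 2) = 10 * real n - 12 + 2 * real n * (2 * real n - 2) * b"
  proof -
    have "t1 * (t1 * (2 * real n - 2) - 4 * real n + 10) = 2 * real n"
      using root by (simp add: power2_eq_square algebra_simps)
    then have "t1 * (2 * real n - 2) - 4 * real n + 10 = 2 * real n / t1"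
      using t1 by (simp add: field_simps)
    also have "\<dots> = 2 * real n * (2 * real n - 2) * b"
      unfolding b_def using pos t1 by (simp add: field_simps)
    finally show ?thesis by simp
  qed
  moreover have "t2 * (2 * real n - 2) + (6 * real n - 2) = 6 * real n - 2 - 2 * real n * (2 * real n - 2) * b"
  proof -
    have "t2 * (2 * real n - 2) = - 2 * real n / t1"
      using prod t1 by (simp add: field_simps)
    also have "\<dots> = - (2 * real n * (2 * real n - 2) * b)"
      unfolding b_def using pos t1 by (simp add: field_simps)
    finally show ?thesis by simp
  qed
  ultimately show ?thesis
    unfolding b_def dsl_triangularization_def dsl_triangularization_axioms_def quaternion_nc_index_def
    using n by simp
qed

theorem theorem3p3:
  fixes G (structure) and x y :: 'a and n :: nat and t1 t2 :: real and vs :: "'a list"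
  assumes grp: "group G"
    and n2: "n \<ge> 2"
    and fin: "finite (carrier G)"
    and ord: "card (carrier G) = 4 * n"
    and xy: "x \<in> carrier G" "y \<in> carrier G"
    and gen: "generate G {x, y} = carrier G"
    and r1: "x [^] (2 * n) = \<one>"
    and r2: "x [^] n = y [^] (2::nat)"
    and r3: "y \<otimes> x = inv x \<otimes> y"
    and roots: "\<forall>s::real. (2 * real n - 2) * s\<^sup>2 + (- 4 * real n + 10) * s - 2 * real n
                  = (2 * real n - 2) * (s - t1) * (s - t2)"
    and vs: "distinct vs" "set vs = nc_vertices G"
  shows "char_poly (dist_signless_laplacian (nc_vertices G) (nc_adj G) vs)
       = poly_of_roots
           (replicate_mset n (4 * real n - 4)
            + replicate_mset (2 * n - 3) (6 * real n - 8)
            + replicate_mset (n - 1) (4 * real n - 2)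
            + {# t1 * (2 * real n - 2) + (6 * real n - 2), t2 * (2 * real n - 2) + (6 * real n - 2) #})"
proof -
  have "gen_quaternion G n x y"
    unfolding gen_quaternion_def gen_quaternion_axioms_def quaternion_nc_index_def
    using grp n2 ord xy gen r1 r2 r3 by simp
  then interpret gen_quaternion G n x y .
  interpret dsl_triangularization n "1 / ((2 * real n - 2) * t1)"
    "t1 * (2 * real n - 2) + (6 * real n - 2)" "t2 * (2 * real n - 2) + (6 * real n - 2)"
    using n2 roots by (rule dsl_triangularization_from_roots)
  have "char_poly (dist_signless_laplacian (nc_vertices G) (nc_adj G) vs) = char_poly dsl_mat"
    by (rule char_poly_dist_signless_laplacian[OF vs])
  also have "\<dots> = poly_of_roots
      (replicate_mset (2 * n - 3) (6 * real n - 8)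
       + {# t1 * (2 * real n - 2) + (6 * real n - 2), t2 * (2 * real n - 2) + (6 * real n - 2) #}
       + replicate_mset n (4 * real n - 4) + replicate_mset (n - 1) (4 * real n - 2))"
    by (rule char_poly_dsl_mat)
  also have "(A :: real multiset) + B + C + D = C + A + D + B" for A B C D
    by (simp add: ac_simps)
  finally show ?thesis .
qed

end
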